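(* (i) Suppose that $\rho$ is an NPT (non-positive partial transpose) bipartite state. For every vector $\ket{y}$ in the negative eigenspace of $\rho^\Gamma$ (the partial transpose of $\rho$ with respect to the first subsystem), let $\ket{y}\in\mathbb{C}^{m(y)}\otimes\mathbb{C}^{n(y)}$, i.e. $m(y)$ and $n(y)$ are the local dimensions of the space supporting $\ket{y}$, and denote $p=\min_{\ket{y}}\{m(y),n(y)\}$, the minimum taken over all $\ket{y}$ in the negative eigenspace of $\rho^\Gamma$. Then $\rho$ can be locally projected (by a product operator) to an NPT state supported on $\mathbb{C}^{p}\otimes\mathbb{C}^{p}$. (ii) Suppose that $W$ is a bipartite entanglement witness. For every vector $\ket{y}$ in the negative eigenspace of $W$, let $\ket{y}\in\mathbb{C}^{m(y)}\otimes\mathbb{C}^{n(y)}$, i.e. $m(y)$ and $n(y)$ are the local dimensions of the space supporting $\ket{y}$, and denote $p=\min_{\ket{y}}\{m(y),n(y)\}$, the minimum taken over all $\ket{y}$ in the negative eigenspace of $W$. Then $W$ can be locally projected (by a product operator) to an entanglement witness supported on $\mathbb{C}^{p}\otimes\mathbb{C}^{p}$.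
   Context: Bipartite quantum systems over the complex field. An entanglement witness (EW) is a Hermitian $W$ with $\mathrm{tr}(W\rho)\geq 0$ for all separable states $\rho$ and $\mathrm{tr}(W\sigma)<0$ for at least one entangled state $\sigma$. $M^\Gamma$ denotes the partial transpose of a bipartite matrix $M$ with respect to the first subsystem; a state $\rho$ is NPT if $\rho^\Gamma$ is not positive semidefinite. "Locally projecting" means applying a product operator $X=U\otimes V$ (e.g. a local unitary followed by a product projector $P=I_p\otimes I_p$) as $X M X^\dagger$. *)

theory Defs
  imports "HOL-Analysis.Analysis"
begin

text \<open>Bipartite system C^M (x) C^N with M = CARD('a), N = CARD('b); the product basis is
  indexed by pairs ('a \<times> 'b). Operators are complex matrices indexed by such pairs.\<close>

type_synonym ('a, 'b) bvec = "complex ^ ('a \<times> 'b)"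
type_synonym ('a, 'b) bop = "complex ^ ('a \<times> 'b) ^ ('a \<times> 'b)"

definition tens :: "complex ^ 'a::finite \<Rightarrow> complex ^ 'b::finite \<Rightarrow> complex ^ ('a \<times> 'b)" where
  "tens u v = (\<chi> ij. u $ fst ij * v $ snd ij)"

definition kron :: "complex ^ 'a::finite ^ 'a \<Rightarrow> complex ^ 'b::finite ^ 'b \<Rightarrow> complex ^ ('a \<times> 'b) ^ ('a \<times> 'b)" where
  "kron A B = (\<chi> ij kl. A $ fst ij $ fst kl * B $ snd ij $ snd kl)"

definition adj :: "complex ^ 'n::finite ^ 'm \<Rightarrow> complex ^ 'm::finite ^ 'n" where
  "adj M = (\<chi> i j. cnj (M $ j $ i))"

definition ptrans :: "('a::finite, 'b::finite) bop \<Rightarrow> ('a::finite, 'b::finite) bop" where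
  "ptrans M = (\<chi> ij kl. M $ (fst kl, snd ij) $ (fst ij, snd kl))"

definition cinner :: "complex ^ 'n::finite \<Rightarrow> complex ^ 'n \<Rightarrow> complex" where
  "cinner x y = (\<Sum>i\<in>UNIV. cnj (x $ i) * y $ i)"

definition hermitian :: "complex ^ 'n::finite ^ 'n \<Rightarrow> bool" where
  "hermitian M \<longleftrightarrow> adj M = M"

definition psd :: "complex ^ 'n::finite ^ 'n \<Rightarrow> bool" where
  "psd M \<longleftrightarrow> hermitian M \<and> (\<forall>x. Im (cinner x (M *v x)) = 0 \<and> 0 \<le> Re (cinner x (M *v x)))"

definition density :: "complex ^ 'n::finite ^ 'n \<Rightarrow> bool" where
  "density M \<longleftrightarrow> psd M \<and> trace M = 1"

definition npt_state :: "('a::finite, 'b::finite) bop \<Rightarrow> bool" where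
  "npt_state \<rho> \<longleftrightarrow> density \<rho> \<and> \<not> psd (ptrans \<rho>)"

definition separable :: "('a::finite, 'b::finite) bop \<Rightarrow> bool" where
  "separable \<rho> \<longleftrightarrow> density \<rho> \<and>
     (\<exists>k (pr :: nat \<Rightarrow> real) (A :: nat \<Rightarrow> complex ^ 'a::finite ^ 'a) (B :: nat \<Rightarrow> complex ^ 'b ^ 'b).
        (\<forall>i<k. 0 \<le> pr i \<and> density (A i) \<and> density (B i)) \<and> (\<Sum>i<k. pr i) = 1 \<and>
        \<rho> = (\<Sum>i<k. pr i *\<^sub>R kron (A i) (B i)))"

definition entangled :: "('a::finite, 'b::finite) bop \<Rightarrow> bool" where
  "entangled \<rho> \<longleftrightarrow> density \<rho> \<and> \<not> separable \<rho>"

definition ent_witness :: "('a::finite, 'b::finite) bop \<Rightarrow> bool" where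
  "ent_witness W \<longleftrightarrow> hermitian W \<and>
     (\<forall>\<rho>. separable \<rho> \<longrightarrow> 0 \<le> Re (trace (W ** \<rho>))) \<and>
     (\<exists>\<sigma>. entangled \<sigma> \<and> Re (trace (W ** \<sigma>)) < 0)"

definition cspan :: "(complex ^ 'n::finite) set \<Rightarrow> (complex ^ 'n) set" where
  "cspan E = {x. \<exists>S c. finite S \<and> S \<subseteq> E \<and> x = (\<Sum>v\<in>S. (\<chi> i. c v * v $ i))}"

definition neg_eigenspace :: "complex ^ 'n::finite ^ 'n \<Rightarrow> (complex ^ 'n) set" where
  "neg_eigenspace H = cspan {v. v \<noteq> 0 \<and> (\<exists>lam::real. lam < 0 \<and> H *v v = (\<chi> i. of_real lam * v $ i))}"

text \<open>Local dimensions of the space supporting y: y \<in> U (x) C^N with dim U = m(y) minimal,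
  resp. y \<in> C^M (x) V with dim V = n(y) minimal (U spanned by m vectors, V by n vectors).\<close>
definition ldim_A :: "('a::finite, 'b::finite) bvec \<Rightarrow> nat" where
  "ldim_A y = (LEAST m. \<exists>u :: nat \<Rightarrow> complex ^ 'a::finite.
                  y \<in> cspan {tens (u i) w | i w. i < m})"

definition ldim_B :: "('a::finite, 'b::finite) bvec \<Rightarrow> nat" where
  "ldim_B y = (LEAST n. \<exists>v :: nat \<Rightarrow> complex ^ 'b.
                  y \<in> cspan {tens w (v j) | j w. j < n})"

definition pmin :: "('a::finite, 'b::finite) bop \<Rightarrow> nat" where
  "pmin H = (LEAST k. \<exists>y \<in> neg_eigenspace H. y \<noteq> 0 \<and> k = min (ldim_A y) (ldim_B y))"

text \<open>M is supported on C^p (x) C^p: its range lies in U (x) V with dim U, dim V \<le> p.\<close>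
definition supported_pp :: "('a::finite, 'b::finite) bop \<Rightarrow> nat \<Rightarrow> bool" where
  "supported_pp M p \<longleftrightarrow> (\<exists>(u :: nat \<Rightarrow> complex ^ 'a::finite) (v :: nat \<Rightarrow> complex ^ 'b).
      range (\<lambda>x. M *v x) \<subseteq> cspan {tens (u i) (v j) | i j. i < p \<and> j < p})"

end

theory Submission
  imports Defs
begin

text \<open>Let \<open>H\<close> be \<open>\<rho>\<^sup>\<Gamma>\<close> or \<open>W\<close>, and let \<open>y \<noteq> 0\<close> in the negative eigenspace of \<open>H\<close> realise
  \<open>p\<close>, so \<open>\<langle>y|H|y\<rangle> < 0\<close> and \<open>y = \<Sum>\<^sub>i a\<^sub>i \<otimes> b\<^sub>i\<close> with \<open>p\<close> terms. Let \<open>A\<close>, \<open>B\<close> put the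
  conjugates of \<open>a\<^sub>i\<close>, \<open>b\<^sub>i\<close> into the rows \<open>k i\<close>, \<open>l i\<close> for injections \<open>k\<close>, \<open>l\<close> of \<open>{..<p}\<close>
  into the two bases. Then \<open>X = A \<otimes> B\<close> has range in a \<open>p \<times> p\<close> product subspace and \<open>X\<^sup>\<dagger>\<close>
  maps \<open>z = \<Sum>\<^sub>i e\<^sub>k\<^sub>i \<otimes> e\<^sub>l\<^sub>i\<close> to \<open>y\<close>, so \<open>\<langle>z|XHX\<^sup>\<dagger>|z\<rangle> < 0\<close>.
  For a state, \<open>(X\<rho>X\<^sup>\<dagger>)\<^sup>\<Gamma> = X'\<rho>\<^sup>\<Gamma>X'\<^sup>\<dagger>\<close> with \<open>X' = conj A \<otimes> B\<close>, so building \<open>X'\<close> from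
  \<open>\<rho>\<^sup>\<Gamma>\<close> keeps the projected state NPT. For a witness, \<open>X\<^sup>\<dagger>\<sigma>X\<close> is a nonnegative combination of
  product operators whenever \<open>\<sigma>\<close> is separable, so \<open>XWX\<^sup>\<dagger>\<close> stays nonnegative on separable
  states, while the normalised projector onto \<open>z\<close> is an entangled state on which it is negative.\<close>

section \<open>Sesquilinear algebra of complex matrices\<close>

lemma cspan_eq_span: "cspan E = vec.span E"
  unfolding cspan_def vec.span_explicit vector_scalar_mult_def by blast

definition conj_vec :: "complex ^ 'n::finite \<Rightarrow> complex ^ 'n" where
  "conj_vec v = (\<chi> i. cnj (v $ i))"

definition conj_mat :: "complex ^ 'n::finite ^ 'm::finite \<Rightarrow> complex ^ 'n ^ 'm" where
  "conj_mat A = (\<chi> i j. cnj (A $ i $ j))"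

definition outer :: "complex ^ 'n::finite \<Rightarrow> complex ^ 'n \<Rightarrow> complex ^ 'n ^ 'n" where
  "outer u v = (\<chi> i j. u $ i * cnj (v $ j))"

lemma conj_vec_conj_vec [simp]: "conj_vec (conj_vec v) = v"
  by (simp add: conj_vec_def vec_eq_iff)

lemma conj_mat_conj_mat [simp]: "conj_mat (conj_mat A) = A"
  by (simp add: conj_mat_def vec_eq_iff)

lemma cinner_zero_left [simp]: "cinner 0 y = 0"
  by (simp add: cinner_def)

lemma cinner_zero_right [simp]: "cinner x 0 = 0"
  by (simp add: cinner_def)

lemma cinner_add_right: "cinner x (y + z) = cinner x y + cinner x z"
  by (simp add: cinner_def distrib_left sum.distrib)

lemma cinner_add_left: "cinner (x + y) z = cinner x z + cinner y z"
  by (simp add: cinner_def distrib_right sum.distrib)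

lemma cinner_diff_right: "cinner x (y - z) = cinner x y - cinner x z"
  by (simp add: cinner_def right_diff_distrib sum_subtractf)

lemma cinner_scale_right: "cinner x (c *s y) = c * cinner x y"
  by (simp add: cinner_def sum_distrib_left mult_ac)

lemma cinner_scale_left: "cinner (c *s x) y = cnj c * cinner x y"
  by (simp add: cinner_def sum_distrib_left mult_ac)

lemma cinner_sum_right: "cinner x (sum f S) = (\<Sum>s\<in>S. cinner x (f s))"
  unfolding cinner_def sum_component sum_distrib_left by (rule sum.swap)

lemma cinner_sum_left: "cinner (sum f S) y = (\<Sum>s\<in>S. cinner (f s) y)"
  unfolding cinner_def sum_component cnj_sum sum_distrib_right by (rule sum.swap)

lemma cnj_cinner: "cnj (cinner x y) = cinner y x"
  by (simp add: cinner_def mult.commute)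

lemma cinner_axis_left: "cinner (axis i 1) v = v $ i"
  by (simp add: cinner_def axis_def if_distrib[of cnj] if_distrib[of "\<lambda>x. x * _"] sum.delta
      cong: if_cong)

lemma cinner_self: "cinner x x = of_real ((norm x)\<^sup>2)"
proof -
  have "(norm x)\<^sup>2 = (\<Sum>i\<in>UNIV. (cmod (x $ i))\<^sup>2)"
    unfolding norm_vec_def L2_set_def by (simp add: sum_nonneg)
  then show ?thesis
    unfolding cinner_def of_real_sum by (simp add: complex_norm_square mult.commute del: of_real_power)
qed

lemma cinner_self_pos: "x \<noteq> 0 \<Longrightarrow> 0 < Re (cinner x x)"
  by (simp add: cinner_self)

lemma cinner_adj: "cinner x (M *v y) = cinner (adj M *v x) y"
  unfolding cinner_def adj_def matrix_vector_mult_def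
  by (simp add: sum_distrib_left sum_distrib_right mult_ac cnj_sum) (rule sum.swap)

lemma adj_adj [simp]: "adj (adj M) = M"
  by (simp add: adj_def vec_eq_iff)

lemma adj_mult: "adj (A ** B) = adj B ** adj A"
  by (simp add: adj_def matrix_matrix_mult_def vec_eq_iff cnj_sum mult.commute)

lemma adj_diff: "adj (A - B) = adj A - adj B"
  by (simp add: adj_def vec_eq_iff)

lemma scaleR_mat_entry: "(c *\<^sub>R A) $ i $ j = of_real c * (A $ i $ j :: complex)"
  unfolding vector_scaleR_component by (simp add: scaleR_conv_of_real)

lemma adj_scaleR: "adj (c *\<^sub>R A) = c *\<^sub>R adj A"
  by (simp add: adj_def vec_eq_iff scaleR_mat_entry)

lemma matrix_vector_mult_sum: "(M::complex^'n::finite^'m::finite) *v sum f S = (\<Sum>s\<in>S. M *v f s)"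
  by (induction S rule: infinite_finite_induct) (auto simp: matrix_vector_right_distrib)

lemma scaleR_matrix_vector_mult: "(c *\<^sub>R A) *v x = (of_real c :: complex) *s (A *v x)"
  by (simp add: matrix_vector_mult_def vector_scalar_mult_def vec_eq_iff sum_distrib_left
      scaleR_mat_entry mult_ac) (simp add: scaleR_conv_of_real mult_ac)

lemma matrix_vector_mult_axis: "(M::complex^'n::finite^'m::finite) *v axis i 1 = (\<chi> r. M $ r $ i)"
  by (simp add: matrix_vector_mult_def axis_def vec_eq_iff mult.commute[of "M $ _ $ _"]
      if_distrib[of "\<lambda>x. x * _"] sum.delta cong: if_cong)

lemma outer_matrix_vector_mult: "outer u v *v x = cinner v x *s u"
  by (simp add: outer_def matrix_vector_mult_def cinner_def vector_scalar_mult_def vec_eq_iff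
      sum_distrib_left sum_distrib_right mult_ac)

lemma matrix_mult_sum_right: "(W::complex^'n::finite^'m::finite) ** sum f S = (\<Sum>s\<in>S. W ** f s)"
  by (induction S rule: infinite_finite_induct) (auto simp: matrix_add_ldistrib)

lemma matrix_mult_sum_left: "sum f S ** (W::complex^'n::finite^'m::finite) = (\<Sum>s\<in>S. f s ** W)"
  by (induction S rule: infinite_finite_induct)
     (auto simp: matrix_matrix_mult_def vec_eq_iff distrib_right sum.distrib)

lemma matrix_mult_scaleR_left: "(c *\<^sub>R M) ** (N::complex^'k::finite^'n::finite) = c *\<^sub>R (M ** N)"
  by (simp add: matrix_matrix_mult_def vec_eq_iff scaleR_sum_right)

lemma matrix_mult_scaleR_right: "(M::complex^'n::finite^'m::finite) ** (c *\<^sub>R N) = c *\<^sub>R (M ** N)"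
  by (simp add: matrix_matrix_mult_def vec_eq_iff scaleR_sum_right)

lemma trace_sum: "trace (sum f S) = (\<Sum>s\<in>S. trace (f s :: complex^'n::finite^'n))"
  unfolding trace_def by (simp add: sum_component) (rule sum.swap)

lemma trace_scaleR: "trace (c *\<^sub>R (M::complex^'n::finite^'n)) = of_real c * trace M"
  by (simp add: trace_def sum_distrib_left scaleR_mat_entry) (simp add: scaleR_conv_of_real)

lemma trace_mult_outer: "trace (W ** outer v v) = cinner v (W *v v)"
  unfolding trace_def matrix_matrix_mult_def outer_def cinner_def matrix_vector_mult_def
  by (simp add: sum_distrib_left mult_ac)

lemma cinner_congruence:
  "cinner z ((X ** H ** adj X) *v z) = cinner (adj X *v z) (H *v (adj X *v z))"
  by (simp add: matrix_vector_mul_assoc[symmetric] cinner_adj)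

section \<open>Hermitian and positive semidefinite matrices\<close>

lemma hermitian_cinner_swap: "hermitian M \<Longrightarrow> cinner x (M *v y) = cnj (cinner y (M *v x))"
  by (metis cinner_adj cnj_cinner hermitian_def)

lemma hermitian_form_real: "hermitian M \<Longrightarrow> Im (cinner x (M *v x)) = 0"
  using hermitian_cinner_swap[of M x x] by (metis Reals_cnj_iff complex_is_Real_iff)

lemma hermitian_entry: "hermitian M \<Longrightarrow> M $ j $ i = cnj (M $ i $ j)"
  unfolding hermitian_def adj_def by (metis vec_lambda_beta)

lemma hermitian_congruence: "hermitian H \<Longrightarrow> hermitian (X ** H ** adj X)"
  unfolding hermitian_def by (simp add: adj_mult matrix_mul_assoc)

lemma hermitian_ptrans: "hermitian M \<Longrightarrow> hermitian (ptrans M)"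
  unfolding hermitian_def adj_def ptrans_def by (simp add: vec_eq_iff)

lemma not_psd_imp_neg_form: "hermitian H \<Longrightarrow> \<not> psd H \<Longrightarrow> \<exists>x. Re (cinner x (H *v x)) < 0"
  unfolding psd_def using hermitian_form_real by (meson not_le)

lemma psd_iff_form_nonneg: "psd H \<longleftrightarrow> hermitian H \<and> (\<forall>x. 0 \<le> Re (cinner x (H *v x)))"
  unfolding psd_def using hermitian_form_real by blast

lemma cinner_axis_matrix_axis: "cinner (axis i 1) (M *v axis j 1) = M $ i $ j"
  by (simp add: cinner_axis_left matrix_vector_mult_axis)

lemma psd_diag: "psd (M::complex^'n::finite^'n) \<Longrightarrow> Im (M $ i $ i) = 0 \<and> 0 \<le> Re (M $ i $ i)"
  unfolding psd_def by (metis cinner_axis_matrix_axis)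

lemma psd_zero_diag_imp_zero:
  assumes "psd (M::complex^'n::finite^'n)" "\<And>i. M $ i $ i = 0"
  shows "M = 0"
proof -
  have "M $ i $ j = 0" if "i \<noteq> j" for i j
  proof -
    define t where "t = - cnj (M $ i $ j)"
    let ?x = "axis i 1 + t *s axis j 1"
    have "cinner ?x (M *v ?x) = t * M $ i $ j + cnj t * M $ j $ i"
      using assms(2) by (simp add: matrix_vector_right_distrib vector_scalar_commute
          cinner_add_left cinner_add_right cinner_scale_left cinner_scale_right
          cinner_axis_matrix_axis)
    also have "\<dots> = - 2 * of_real ((cmod (M $ i $ j))\<^sup>2)"
      using hermitian_entry[of M i j] assms(1)
      by (simp add: psd_def t_def complex_norm_square mult.commute del: of_real_power)
    finally have "Re (cinner ?x (M *v ?x)) = - 2 * (cmod (M $ i $ j))\<^sup>2" by simp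
    moreover have "0 \<le> Re (cinner ?x (M *v ?x))" using assms(1) unfolding psd_def by blast
    ultimately show ?thesis by simp
  qed
  then show ?thesis using assms(2) by (metis vec_eq_iff zero_index)
qed

lemma psd_trace: "psd (M::complex^'n::finite^'n) \<Longrightarrow> trace M = of_real (Re (trace M)) \<and> 0 \<le> Re (trace M)"
  using psd_diag[of M] unfolding trace_def by (simp add: complex_eq_iff Re_sum Im_sum sum_nonneg)

lemma psd_trace_pos:
  assumes "psd (M::complex^'n::finite^'n)" "M \<noteq> 0"
  shows "0 < Re (trace M)"
proof (rule ccontr)
  assume "\<not> 0 < Re (trace M)"
  then have "(\<Sum>i\<in>UNIV. Re (M $ i $ i)) = 0"
    using psd_trace[OF assms(1)] unfolding trace_def Re_sum by linarith
  then have "Re (M $ i $ i) = 0" for i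
    using psd_diag[OF assms(1)] by (subst (asm) sum_nonneg_eq_0_iff) auto
  then have "M = 0"
    using psd_diag[OF assms(1)] by (intro psd_zero_diag_imp_zero assms(1)) (simp add: complex_eq_iff)
  then show False using assms(2) by blast
qed

lemma psd_outer: "psd (outer v v)"
proof -
  have "cinner x (outer v v *v x) = of_real ((cmod (cinner v x))\<^sup>2)" for x
    using cnj_cinner[of v x] by (simp add: outer_matrix_vector_mult cinner_scale_right
        complex_norm_square mult.commute del: of_real_power)
  moreover have "hermitian (outer v v)"
    by (simp add: hermitian_def adj_def outer_def vec_eq_iff mult.commute)
  ultimately show ?thesis unfolding psd_def by simp
qed

lemma psd_add: "psd A \<Longrightarrow> psd B \<Longrightarrow> psd (A + B)"
  unfolding psd_def hermitian_def
  by (simp add: adj_def vec_eq_iff matrix_vector_mult_add_rdistrib cinner_add_right)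

lemma psd_zero: "psd 0"
  by (simp add: psd_def hermitian_def adj_def vec_eq_iff cinner_def)

lemma psd_sum: "(\<And>i. i \<in> S \<Longrightarrow> psd (f i)) \<Longrightarrow> psd (sum f S)"
  by (induction S rule: infinite_finite_induct) (auto simp: psd_add psd_zero)

lemma psd_scaleR: "psd A \<Longrightarrow> 0 \<le> c \<Longrightarrow> psd (c *\<^sub>R A)"
  unfolding psd_def hermitian_def
  by (simp add: adj_scaleR scaleR_matrix_vector_mult cinner_scale_right)

lemma psd_scaleR_iff: "0 < c \<Longrightarrow> psd (c *\<^sub>R A) \<longleftrightarrow> psd A"
  using psd_scaleR[of "c *\<^sub>R A" "1 / c"] psd_scaleR[of A c] by auto

lemma psd_congruence: "psd H \<Longrightarrow> psd (X ** H ** adj X)"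
  unfolding psd_iff_form_nonneg by (simp add: hermitian_congruence cinner_congruence)

lemma density_normalize:
  assumes "psd M" "M \<noteq> 0"
  shows "density ((1 / Re (trace M)) *\<^sub>R M)"
proof -
  define t where "t = Re (trace M)"
  have "0 < t" using psd_trace_pos[OF assms] by (simp add: t_def)
  moreover have "trace M = of_real t" using psd_trace[OF assms(1)] by (simp add: t_def)
  then have "trace ((1 / t) *\<^sub>R M) = 1"
    using \<open>0 < t\<close> by (simp add: trace_scaleR flip: of_real_mult)
  ultimately show ?thesis unfolding density_def t_def[symmetric] using psd_scaleR[OF assms(1)] by simp
qed

section \<open>Rank-one decomposition and tensor products\<close>

lemma schur_complement_apply:
  fixes M :: "complex^'n::finite^'n"
  assumes herm: "hermitian M" and m: "0 < m" and Mii: "M $ i $ i = of_real m"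
    and w: "w = (of_real (1 / sqrt m) :: complex) *s (M *v axis i 1)"
  shows "(M - outer w w) *v x = M *v (x - ((M *v x) $ i / M $ i $ i) *s axis i 1)"
proof -
  have "cinner (M *v axis i 1) x = (M *v x) $ i"
    using cinner_adj[of "axis i 1" "adj M" x] herm by (simp add: hermitian_def cinner_axis_left)
  then have "cinner w x = of_real (1 / sqrt m) * (M *v x) $ i"
    by (simp add: w cinner_scale_left)
  moreover have "(of_real (1 / sqrt m) :: complex) * of_real (1 / sqrt m) = 1 / M $ i $ i"
    using m by (simp add: Mii flip: of_real_mult)
  ultimately have "outer w w *v x = M *v (((M *v x) $ i / M $ i $ i) *s axis i 1)"
    by (simp add: outer_matrix_vector_mult w vector_scalar_commute vector_smult_assoc
        field_simps)
  then show ?thesis by (simp add: matrix_vector_mult_diff_rdistrib matrix_vector_mult_diff_distrib)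
qed

lemma psd_schur_step:
  fixes M :: "complex^'n::finite^'n"
  assumes psd: "psd M" and nz: "M $ i $ i \<noteq> 0"
  obtains w where "psd (M - outer w w)" and "(M - outer w w) $ i $ i = 0"
    and "\<And>r. M $ r $ r = 0 \<Longrightarrow> (M - outer w w) $ r $ r = 0"
proof -
  have herm: "hermitian M" using psd by (simp add: psd_def)
  define m where "m = Re (M $ i $ i)"
  have Mii: "M $ i $ i = of_real m" using psd_diag[OF psd, of i] by (simp add: m_def complex_eq_iff)
  have m: "0 < m" using psd_diag[OF psd, of i] nz Mii by force
  define w where "w = (of_real (1 / sqrt m) :: complex) *s (M *v axis i 1)"
  define M' where "M' = M - outer w w"
  have "cinner x (M' *v x) = cinner y (M *v y)"
    if y: "y = x - ((M *v x) $ i / M $ i $ i) *s axis i 1" for x y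
  proof -
    let ?s = "(M *v x) $ i / M $ i $ i"
    have "cinner (axis i 1) (M *v y) = 0"
      using nz by (simp add: y cinner_axis_left matrix_vector_mult_diff_distrib
          vector_scalar_commute matrix_vector_mult_axis)
    moreover have "x = y + ?s *s axis i 1" using y by simp
    then have "cinner x (M *v y) = cinner y (M *v y) + cnj ?s * cinner (axis i 1) (M *v y)"
      by (metis cinner_add_left cinner_scale_left)
    ultimately have "cinner x (M *v y) = cinner y (M *v y)" by simp
    then show ?thesis
      using schur_complement_apply[OF herm m Mii w_def, of x] by (simp add: M'_def y)
  qed
  moreover have "hermitian M'"
    using herm psd_outer[of w] by (simp add: M'_def hermitian_def psd_def adj_diff)
  ultimately have psd': "psd M'"
    using psd unfolding psd_iff_form_nonneg by metis
  have diag: "M' $ r $ r = M $ r $ r - of_real ((cmod (w $ r))\<^sup>2)" for r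
    by (simp add: M'_def outer_def complex_norm_square del: of_real_power)
  have "w $ i = of_real (m / sqrt m)" by (simp add: w_def matrix_vector_mult_axis Mii)
  then have "(cmod (w $ i))\<^sup>2 = (m / sqrt m)\<^sup>2" by (simp only: norm_of_real power2_abs)
  also have "\<dots> = m" using m by (simp add: power_divide power2_eq_square)
  finally have "(cmod (w $ i))\<^sup>2 = m" .
  then have "M' $ i $ i = 0" using diag[of i] Mii by simp
  moreover have "M' $ r $ r = 0" if "M $ r $ r = 0" for r
    using diag[of r] that psd_diag[OF psd', of r] by (simp add: complex_eq_iff)
  ultimately show ?thesis using that psd' unfolding M'_def by blast
qed

lemma psd_sum_outer:
  assumes "psd (M::complex^'n::finite^'n)"
  shows "\<exists>(N::nat) v. M = (\<Sum>k<N. outer (v k) (v k))"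
  using assms
proof (induction "card {r. M $ r $ r \<noteq> 0}" arbitrary: M rule: less_induct)
  case less
  show ?case
  proof (cases "\<forall>i. M $ i $ i = 0")
    case True
    then have "M = 0" using psd_zero_diag_imp_zero less.prems by blast
    then show ?thesis by (intro exI[of _ 0]) simp
  next
    case False
    then obtain i where nz: "M $ i $ i \<noteq> 0" by blast
    obtain w where psd': "psd (M - outer w w)" and "(M - outer w w) $ i $ i = 0"
      and "\<And>r. M $ r $ r = 0 \<Longrightarrow> (M - outer w w) $ r $ r = 0"
      using psd_schur_step[OF less.prems nz] by blast
    then have "{r. (M - outer w w) $ r $ r \<noteq> 0} \<subset> {r. M $ r $ r \<noteq> 0}"
      using nz by blast
    then have "card {r. (M - outer w w) $ r $ r \<noteq> 0} < card {r. M $ r $ r \<noteq> 0}"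
      by (simp add: psubset_card_mono)
    then obtain N :: nat and v where "M - outer w w = (\<Sum>k<N. outer (v k) (v k))"
      using less.hyps psd' by blast
    then have "M = (\<Sum>k<Suc N. outer ((v(N := w)) k) ((v(N := w)) k))"
      by (simp add: algebra_simps)
    then show ?thesis by blast
  qed
qed

lemma trace_mult_psd_nonneg:
  assumes "psd W" "psd \<sigma>"
  shows "0 \<le> Re (trace (W ** \<sigma>))"
proof -
  obtain N v where "\<sigma> = (\<Sum>k<(N::nat). outer (v k) (v k))" using psd_sum_outer[OF assms(2)] by blast
  then show ?thesis using assms(1)
    by (simp add: matrix_mult_sum_right trace_sum trace_mult_outer Re_sum sum_nonneg psd_def)
qed

lemma sum_UNIV_prod:
  "(\<Sum>x\<in>(UNIV::('a::finite \<times> 'b::finite) set). f x) = (\<Sum>a\<in>UNIV. \<Sum>b\<in>UNIV. f (a, b))"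
  by (simp add: sum.cartesian_product UNIV_Times_UNIV[symmetric] del: UNIV_Times_UNIV)

lemma kron_mult: "kron A B ** kron C D = kron (A ** C) (B ** D)"
  unfolding kron_def matrix_matrix_mult_def by (simp add: vec_eq_iff sum_UNIV_prod sum_product mult_ac)

lemma adj_kron: "adj (kron A B) = kron (adj A) (adj B)"
  by (simp add: adj_def kron_def vec_eq_iff)

lemma trace_kron: "trace (kron A B) = trace A * trace B"
  by (simp add: trace_def kron_def sum_UNIV_prod sum_product)

lemma kron_outer: "kron (outer a b) (outer c d) = outer (tens a c) (tens b d)"
  by (simp add: kron_def outer_def tens_def vec_eq_iff mult_ac)

lemma kron_sum_left: "kron (sum f S) B = (\<Sum>s\<in>S. kron (f s) B)"
  by (induction S rule: infinite_finite_induct) (auto simp: kron_def vec_eq_iff distrib_right)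

lemma kron_sum_right: "kron A (sum f S) = (\<Sum>s\<in>S. kron A (f s))"
  by (induction S rule: infinite_finite_induct) (auto simp: kron_def vec_eq_iff distrib_left)

lemma kron_scaleR: "kron (a *\<^sub>R A) (b *\<^sub>R B) = (a * b) *\<^sub>R kron A B"
  by (simp add: kron_def vec_eq_iff scaleR_mat_entry mult_ac)

lemma kron_matrix_vector_mult_tens: "kron C D *v tens x y = tens (C *v x) (D *v y)"
  by (simp add: kron_def tens_def matrix_vector_mult_def vec_eq_iff sum_UNIV_prod sum_product mult_ac)

lemma psd_kron:
  assumes "psd A" "psd B"
  shows "psd (kron A B)"
proof -
  obtain N u where "A = (\<Sum>k<(N::nat). outer (u k) (u k))" using psd_sum_outer[OF assms(1)] by blast
  moreover obtain K v where "B = (\<Sum>k<(K::nat). outer (v k) (v k))"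
    using psd_sum_outer[OF assms(2)] by blast
  ultimately have "kron A B = (\<Sum>j<K. \<Sum>k<N. outer (tens (u k) (v j)) (tens (u k) (v j)))"
    by (simp add: kron_sum_left kron_sum_right kron_outer)
  then show ?thesis by (simp add: psd_sum psd_outer)
qed

section \<open>Negative eigenvectors\<close>

lemma scaleR_vec_eq_scale: "r *\<^sub>R (x::complex^'n::finite) = (of_real r :: complex) *s x"
  unfolding vec_eq_iff vector_scaleR_component vector_scalar_mult_def by (simp add: scaleR_conv_of_real)

lemma form_attains_min_on_sphere:
  fixes H :: "complex^'n::finite^'n"
  obtains x0 where "norm x0 = 1"
    and "\<And>x. Re (cinner x0 (H *v x0)) * (norm x)\<^sup>2 \<le> Re (cinner x (H *v x))"
proof -
  let ?f = "\<lambda>x::complex^'n. Re (cinner x (H *v x))"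
  have "continuous_on (sphere 0 1) ?f"
    unfolding cinner_def matrix_vector_mult_def by (intro continuous_intros)
  moreover have "axis undefined 1 \<in> sphere (0::complex^'n) 1" by simp
  then have "sphere (0::complex^'n) 1 \<noteq> {}" by blast
  ultimately obtain x0 where x0: "x0 \<in> sphere 0 1" and min: "\<And>y. y \<in> sphere 0 1 \<Longrightarrow> ?f x0 \<le> ?f y"
    using continuous_attains_inf[OF compact_sphere] by blast
  have "?f x0 * (norm x)\<^sup>2 \<le> ?f x" for x
  proof (cases "x = 0")
    case False
    then have "?f x0 \<le> ?f ((1 / norm x) *\<^sub>R x)" by (intro min) simp
    also have "\<dots> = ?f x / (norm x)\<^sup>2"
      by (simp add: scaleR_vec_eq_scale vector_scalar_commute cinner_scale_left cinner_scale_right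
          power2_eq_square)
    finally show ?thesis using False by (simp add: field_simps)
  qed simp
  then show ?thesis using that x0 by simp
qed

lemma cinner_form_add_scale:
  "cinner (x + c *s z) (G *v (x + c *s z)) = cinner x (G *v x) + c * cinner x (G *v z)
     + cnj c * cinner z (G *v x) + cnj c * c * cinner z (G *v z)"
  by (simp add: matrix_vector_right_distrib vector_scalar_commute cinner_add_left cinner_add_right
      cinner_scale_left cinner_scale_right algebra_simps)

lemma psd_form_zero_imp_kernel:
  fixes G :: "complex^'n::finite^'n"
  assumes psd: "psd G" and zero: "Re (cinner x (G *v x)) = 0"
  shows "G *v x = 0"
proof (rule ccontr)
  define z where "z = G *v x"
  assume "G *v x \<noteq> 0"
  \<comment> \<open>the form is negative at \<open>x - t z\<close> for small \<open>t > 0\<close>\<close>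
  define a where "a = Re (cinner z z)"
  define b where "b = Re (cinner z (G *v z))"
  define t where "t = a / (\<bar>b\<bar> + 1)"
  have a: "0 < a" using \<open>G *v x \<noteq> 0\<close> by (simp add: a_def z_def cinner_self_pos)
  then have t: "0 < t" by (simp add: t_def)
  have "t * b \<le> t * \<bar>b\<bar>" using t by (simp add: mult_left_mono)
  also have "\<dots> < a" using a by (simp add: t_def field_simps)
  finally have "t * t * b < 2 * t * a" using a t by (simp add: mult.assoc mult.left_commute)
  have xz: "Re (cinner x (G *v z)) = a"
    using hermitian_cinner_swap[of G x z] psd by (simp add: a_def z_def psd_def)
  have zx: "Re (cinner z (G *v x)) = a" by (simp add: a_def z_def)
  let ?y = "x + of_real (- t) *s z"
  have "Re (cinner ?y (G *v ?y)) = t * t * b - 2 * t * a"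
    unfolding cinner_form_add_scale using zero xz zx by (simp add: b_def)
  moreover have "0 \<le> Re (cinner ?y (G *v ?y))" using psd by (simp add: psd_def)
  ultimately show False using \<open>t * t * b < 2 * t * a\<close> by linarith
qed

lemma hermitian_not_psd_neg_eigenvector:
  fixes H :: "complex^'n::finite^'n"
  assumes herm: "hermitian H" and "\<not> psd H"
  obtains v and lam :: real where "v \<noteq> 0" "lam < 0" "H *v v = (\<chi> i. of_real lam * v $ i)"
proof -
  obtain x1 where x1: "Re (cinner x1 (H *v x1)) < 0" using not_psd_imp_neg_form assms by blast
  obtain x0 where x0: "norm x0 = 1"
    and min: "\<And>x. Re (cinner x0 (H *v x0)) * (norm x)\<^sup>2 \<le> Re (cinner x (H *v x))"
    using form_attains_min_on_sphere by blast
  define mu where "mu = Re (cinner x0 (H *v x0))"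
  have "mu * (norm x1)\<^sup>2 < 0" using min[of x1] x1 by (simp add: mu_def)
  then have mu: "mu < 0" by (simp add: mult_less_0_iff)
  \<comment> \<open>\<open>H - \<mu> I\<close> is positive semidefinite and its form vanishes at the minimiser \<open>x\<^sub>0\<close>\<close>
  define G where "G = H - mu *\<^sub>R mat 1"
  have Gx: "G *v x = H *v x - (of_real mu :: complex) *s x" for x
    by (simp add: G_def matrix_vector_mult_diff_rdistrib scaleR_matrix_vector_mult)
  have G_form: "Re (cinner x (G *v x)) = Re (cinner x (H *v x)) - mu * (norm x)\<^sup>2" for x
    by (simp add: Gx cinner_diff_right cinner_scale_right cinner_self)
  have "hermitian G" using herm
    by (simp add: G_def hermitian_def adj_diff adj_scaleR adj_def mat_def vec_eq_iff)
  then have "psd G" unfolding psd_iff_form_nonneg using min by (simp add: G_form mu_def)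
  moreover have "Re (cinner x0 (G *v x0)) = 0" using x0 by (simp add: G_form mu_def)
  ultimately have "G *v x0 = 0" by (rule psd_form_zero_imp_kernel)
  then have "H *v x0 = (\<chi> i. of_real mu * x0 $ i)" by (simp add: Gx vector_scalar_mult_def)
  moreover have "x0 \<noteq> 0" using x0 by auto
  ultimately show ?thesis using that mu by blast
qed

lemma hermitian_eigenvectors_orthogonal:
  assumes "hermitian H" "H *v u = (of_real l :: complex) *s u" "H *v v = (of_real m :: complex) *s v"
    and "l \<noteq> m"
  shows "cinner u v = 0"
proof -
  have "of_real m * cinner u v = cinner u (H *v v)" by (simp add: assms(3) cinner_scale_right)
  also have "\<dots> = cnj (cinner v (H *v u))" by (rule hermitian_cinner_swap[OF assms(1)])
  also have "\<dots> = of_real l * cinner u v" by (simp add: assms(2) cinner_scale_right cnj_cinner)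
  finally have "(of_real m - of_real l) * cinner u v = 0" by (simp add: algebra_simps)
  then show ?thesis using assms(4) by simp
qed

lemma hermitian_form_sum_eigenvectors:
  assumes herm: "hermitian H" and L: "finite L"
    and eig: "\<And>l. l \<in> L \<Longrightarrow> H *v Y l = (of_real l :: complex) *s Y l"
  shows "cinner (\<Sum>l\<in>L. Y l) (H *v (\<Sum>l\<in>L. Y l)) = (\<Sum>l\<in>L. of_real l * cinner (Y l) (Y l))"
proof -
  have "cinner (\<Sum>l\<in>L. Y l) (H *v (\<Sum>l\<in>L. Y l)) = (\<Sum>l\<in>L. \<Sum>m\<in>L. cinner (Y l) (H *v Y m))"
    by (simp add: matrix_vector_mult_sum cinner_sum_left cinner_sum_right) (rule sum.swap)
  also have "\<dots> = (\<Sum>l\<in>L. \<Sum>m\<in>L. if m = l then of_real l * cinner (Y l) (Y l) else 0)"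
    using hermitian_eigenvectors_orthogonal[OF herm eig eig]
    by (intro sum.cong refl) (auto simp: eig cinner_scale_right)
  finally show ?thesis using L by simp
qed

lemma neg_eigenspace_form_neg:
  fixes H :: "complex^'n::finite^'n"
  assumes herm: "hermitian H" and y: "y \<in> neg_eigenspace H" "y \<noteq> 0"
  shows "Re (cinner y (H *v y)) < 0"
proof -
  obtain S c where S: "finite S"
    "S \<subseteq> {v. v \<noteq> 0 \<and> (\<exists>lam::real. lam < 0 \<and> H *v v = (\<chi> i. of_real lam * v $ i))}"
    and y_sum: "y = (\<Sum>v\<in>S. c v *s v)"
    using y(1) unfolding neg_eigenspace_def cspan_def by (auto simp: vector_scalar_mult_def)
  then have "\<forall>v\<in>S. \<exists>l::real. l < 0 \<and> H *v v = of_real l *s v"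
    by (auto simp: vector_scalar_mult_def)
  then obtain lam where lam: "\<And>v. v \<in> S \<Longrightarrow> lam v < 0 \<and> H *v v = (of_real (lam v) :: complex) *s v"
    by metis
  \<comment> \<open>group the eigenvectors by eigenvalue; the groups are mutually orthogonal\<close>
  define Y where "Y l = (\<Sum>v\<in>{v\<in>S. lam v = l}. c v *s v)" for l
  have y_Y: "y = (\<Sum>l\<in>lam ` S. Y l)" unfolding y_sum Y_def by (rule sum.image_gen[OF S(1)])
  have "H *v Y l = (of_real l :: complex) *s Y l" for l
  proof -
    have "H *v Y l = (\<Sum>v\<in>{v\<in>S. lam v = l}. c v *s (H *v v))"
      by (simp add: Y_def matrix_vector_mult_sum vector_scalar_commute)
    also have "\<dots> = (\<Sum>v\<in>{v\<in>S. lam v = l}. (of_real l :: complex) *s (c v *s v))"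
      by (intro sum.cong refl) (simp add: lam vector_smult_assoc mult.commute)
    finally show ?thesis by (simp add: Y_def sum_cmul[symmetric] vector_smult_assoc)
  qed
  then have "Re (cinner y (H *v y)) = (\<Sum>l\<in>lam ` S. l * (norm (Y l))\<^sup>2)"
    unfolding y_Y by (simp add: hermitian_form_sum_eigenvectors[OF herm] S(1) cinner_self Re_sum)
  also have "\<dots> < (\<Sum>l\<in>lam ` S. 0)"
  proof (rule sum_strict_mono_ex1)
    show "\<forall>l\<in>lam ` S. l * (norm (Y l))\<^sup>2 \<le> 0"
      using lam by (metis imageE less_imp_le mult_nonpos_nonneg zero_le_power2)
    have "\<exists>l\<in>lam ` S. Y l \<noteq> 0" using y(2) y_Y by (metis sum.neutral)
    then show "\<exists>l\<in>lam ` S. l * (norm (Y l))\<^sup>2 < 0"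
      using lam by (metis imageE mult_neg_pos zero_less_norm_iff zero_less_power)
  qed (use S(1) in simp)
  finally show ?thesis by simp
qed

section \<open>Local dimensions\<close>

lemma tens_add_left: "tens (u + v) w = tens u w + tens v w"
  by (simp add: tens_def vec_eq_iff distrib_right)

lemma tens_add_right: "tens u (v + w) = tens u v + tens u w"
  by (simp add: tens_def vec_eq_iff distrib_left)

lemma scale_tens_left: "c *s tens u v = tens (c *s u) v"
  by (simp add: tens_def vec_eq_iff vector_scalar_mult_def mult_ac)

lemma scale_tens_right: "c *s tens u v = tens u (c *s v)"
  by (simp add: tens_def vec_eq_iff vector_scalar_mult_def mult_ac)

lemma tens_zero_left [simp]: "tens 0 v = 0"
  by (simp add: tens_def vec_eq_iff)

lemma tens_zero_right [simp]: "tens u 0 = 0"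
  by (simp add: tens_def vec_eq_iff)

lemma span_tens_left_eq_sum:
  fixes u :: "nat \<Rightarrow> complex^'a::finite"
  assumes "y \<in> vec.span {tens (u i) (w::complex^'b::finite) | i w. i < m}"
  shows "\<exists>b. y = (\<Sum>i<m. tens (u i) (b i))"
  using assms
proof (induction rule: vec.span_induct_alt)
  case base
  show ?case by (intro exI[of _ "\<lambda>_. 0"]) simp
next
  case (step c x y)
  then obtain i w where x: "x = tens (u i) w" "i < m" by blast
  from step obtain b where b: "y = (\<Sum>i<m. tens (u i) (b i))" by blast
  define b' where "b' j = (if j = i then c *s w else 0) + b j" for j
  have "(\<Sum>j<m. tens (u j) (b' j)) = (\<Sum>j<m. (if j = i then tens (u i) (c *s w) else 0)) + y"
    by (simp add: b'_def tens_add_right b sum.distrib if_distrib[of "tens _"] cong: if_cong)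
  also have "\<dots> = c *s x + y" using x by (simp add: scale_tens_right)
  finally show ?case by metis
qed

lemma span_tens_right_eq_sum:
  fixes v :: "nat \<Rightarrow> complex^'b::finite"
  assumes "y \<in> vec.span {tens (w::complex^'a::finite) (v j) | j w. j < n}"
  shows "\<exists>a. y = (\<Sum>j<n. tens (a j) (v j))"
  using assms
proof (induction rule: vec.span_induct_alt)
  case base
  show ?case by (intro exI[of _ "\<lambda>_. 0"]) simp
next
  case (step c x y)
  then obtain i w where x: "x = tens w (v i)" "i < n" by blast
  from step obtain a where a: "y = (\<Sum>j<n. tens (a j) (v j))" by blast
  define a' where "a' j = (if j = i then c *s w else 0) + a j" for j
  have "(\<Sum>j<n. tens (a' j) (v j)) = (\<Sum>j<n. (if j = i then tens (c *s w) (v i) else 0)) + y"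
    by (simp add: a'_def tens_add_left a sum.distrib if_distrib[of "\<lambda>z. tens z _"] cong: if_cong)
  also have "\<dots> = c *s x + y" using x by (simp add: scale_tens_left)
  finally show ?case by metis
qed

lemma tens_axis_expansion_left:
  "(y::complex^('a::finite \<times> 'b::finite)) = (\<Sum>r\<in>UNIV. tens (axis r 1) (\<chi> c. y $ (r, c)))"
  by (simp add: vec_eq_iff sum_component tens_def axis_def if_distrib[of "\<lambda>x. x * _"] sum.delta
      cong: if_cong)

lemma tens_axis_expansion_right:
  "(y::complex^('a::finite \<times> 'b::finite)) = (\<Sum>c\<in>UNIV. tens (\<chi> r. y $ (r, c)) (axis c 1))"
  by (simp add: vec_eq_iff sum_component tens_def axis_def if_distrib[of "\<lambda>x. _ * x"] sum.delta
      cong: if_cong)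

lemma tens_axis_expansion:
  "(x::complex^('a::finite \<times> 'b::finite)) = (\<Sum>q\<in>UNIV. x $ q *s tens (axis (fst q) 1) (axis (snd q) 1))"
  by (simp add: vec_eq_iff sum_component tens_def axis_def vector_scalar_mult_def sum_UNIV_prod
      if_distrib[of "\<lambda>z. _ * z"] if_distrib[of "\<lambda>z. z * _"] sum.delta cong: if_cong)

lemma ex_nat_enumeration: "\<exists>h::nat \<Rightarrow> 'a::finite. \<forall>r. \<exists>i < CARD('a). h i = r"
proof -
  obtain h where "bij_betw h {0..<CARD('a)} (UNIV::'a set)"
    using ex_bij_betw_nat_finite[of "UNIV::'a set"] by auto
  then have "h ` {0..<CARD('a)} = UNIV" by (simp add: bij_betw_def)
  then have "\<forall>r. \<exists>i < CARD('a). h i = r" by (metis UNIV_I atLeastLessThan_iff imageE)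
  then show ?thesis by blast
qed

lemma in_cspan_tens_left_card:
  "\<exists>u::nat \<Rightarrow> complex^'a. (y::complex^('a::finite \<times> 'b::finite)) \<in> cspan {tens (u i) w | i w. i < CARD('a)}"
proof -
  obtain h :: "nat \<Rightarrow> 'a" where h: "\<And>r. \<exists>i < CARD('a). h i = r" using ex_nat_enumeration by blast
  have "tens (axis r 1) (\<chi> c. y $ (r, c)) \<in> {tens (axis (h i) 1) w | i w. i < CARD('a)}" for r
    using h[of r] by blast
  then have "y \<in> cspan {tens (axis (h i) 1) w | i w. i < CARD('a)}"
    unfolding cspan_eq_span by (subst tens_axis_expansion_left) (intro vec.span_sum vec.span_base)
  then show ?thesis by (rule exI[of _ "\<lambda>i. axis (h i) 1"])
qed

lemma in_cspan_tens_right_card: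
  "\<exists>v::nat \<Rightarrow> complex^'b. (y::complex^('a::finite \<times> 'b::finite)) \<in> cspan {tens w (v j) | j w. j < CARD('b)}"
proof -
  obtain h :: "nat \<Rightarrow> 'b" where h: "\<And>c. \<exists>j < CARD('b). h j = c" using ex_nat_enumeration by blast
  have "tens (\<chi> r. y $ (r, c)) (axis c 1) \<in> {tens w (axis (h j) 1) | j w. j < CARD('b)}" for c
    using h[of c] by blast
  then have "y \<in> cspan {tens w (axis (h j) 1) | j w. j < CARD('b)}"
    unfolding cspan_eq_span by (subst tens_axis_expansion_right) (intro vec.span_sum vec.span_base)
  then show ?thesis by (rule exI[of _ "\<lambda>j. axis (h j) 1"])
qed

lemma ldim_A_le_card: "ldim_A (y::complex^('a::finite \<times> 'b::finite)) \<le> CARD('a)"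
  unfolding ldim_A_def using in_cspan_tens_left_card by (intro Least_le) blast

lemma ldim_B_le_card: "ldim_B (y::complex^('a::finite \<times> 'b::finite)) \<le> CARD('b)"
  unfolding ldim_B_def using in_cspan_tens_right_card by (intro Least_le) blast

lemma ldim_A_eq_sum:
  "\<exists>u b. (y::complex^('a::finite \<times> 'b::finite)) = (\<Sum>i<ldim_A y. tens (u i) (b i))"
proof -
  have "\<exists>u :: nat \<Rightarrow> complex^'a. y \<in> cspan {tens (u i) w | i w. i < ldim_A y}"
    unfolding ldim_A_def by (rule LeastI_ex) (use in_cspan_tens_left_card in blast)
  then obtain u :: "nat \<Rightarrow> complex^'a" where "y \<in> cspan {tens (u i) w | i w. i < ldim_A y}" by blast
  then show ?thesis using span_tens_left_eq_sum unfolding cspan_eq_span by blast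
qed

lemma ldim_B_eq_sum:
  "\<exists>a v. (y::complex^('a::finite \<times> 'b::finite)) = (\<Sum>j<ldim_B y. tens (a j) (v j))"
proof -
  have "\<exists>v :: nat \<Rightarrow> complex^'b. y \<in> cspan {tens w (v j) | j w. j < ldim_B y}"
    unfolding ldim_B_def by (rule LeastI_ex) (use in_cspan_tens_right_card in blast)
  then obtain v :: "nat \<Rightarrow> complex^'b" where "y \<in> cspan {tens w (v j) | j w. j < ldim_B y}" by blast
  then show ?thesis using span_tens_right_eq_sum unfolding cspan_eq_span by blast
qed

lemma pmin_neg_witness:
  fixes H :: "complex^('a::finite \<times> 'b::finite)^('a \<times> 'b)"
  assumes herm: "hermitian H" and "\<not> psd H"
  obtains a b where "Re (cinner (\<Sum>i<pmin H. tens (a i) (b i)) (H *v (\<Sum>i<pmin H. tens (a i) (b i)))) < 0"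
    and "pmin H \<le> CARD('a)" and "pmin H \<le> CARD('b)"
proof -
  obtain v and lam :: real where "v \<noteq> 0" "lam < 0" "H *v v = (\<chi> i. of_real lam * v $ i)"
    using hermitian_not_psd_neg_eigenvector assms by blast
  then have "v \<in> neg_eigenspace H"
    unfolding neg_eigenspace_def cspan_eq_span by (intro vec.span_base) blast
  then have "\<exists>k. \<exists>y\<in>neg_eigenspace H. y \<noteq> 0 \<and> k = min (ldim_A y) (ldim_B y)"
    using \<open>v \<noteq> 0\<close> by blast
  from LeastI_ex[OF this] obtain y where y: "y \<in> neg_eigenspace H" "y \<noteq> 0"
    and p: "pmin H = min (ldim_A y) (ldim_B y)"
    unfolding pmin_def by blast
  have "\<exists>a b. y = (\<Sum>i<pmin H. tens (a i) (b i))"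
    using ldim_A_eq_sum[of y] ldim_B_eq_sum[of y] p by (cases "ldim_A y \<le> ldim_B y") auto
  moreover have "Re (cinner y (H *v y)) < 0" using neg_eigenspace_form_neg[OF herm y] .
  moreover have "pmin H \<le> CARD('a)" "pmin H \<le> CARD('b)"
    using p ldim_A_le_card[of y] ldim_B_le_card[of y] by auto
  ultimately show ?thesis using that by blast
qed

section \<open>Local projections\<close>

definition rows_matrix :: "(nat \<Rightarrow> 'r::finite) \<Rightarrow> nat \<Rightarrow> (nat \<Rightarrow> complex^'c::finite) \<Rightarrow> complex^'c^'r" where
  "rows_matrix k p a = (\<chi> r c. \<Sum>i<p. if r = k i then a i $ c else 0)"

definition nonzero_rows_le :: "complex^'c::finite^'r::finite \<Rightarrow> nat \<Rightarrow> bool" where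
  "nonzero_rows_le A p \<longleftrightarrow> (\<exists>k::nat \<Rightarrow> 'r. \<forall>r c. r \<notin> k ` {..<p} \<longrightarrow> A $ r $ c = 0)"

lemma rows_matrix_row:
  assumes "inj_on k {..<p}" "i < p"
  shows "rows_matrix k p a $ k i $ c = a i $ c"
proof -
  have "rows_matrix k p a $ k i $ c = (\<Sum>j<p. if j = i then a j $ c else 0)"
    unfolding rows_matrix_def vec_lambda_beta using assms
    by (intro sum.cong refl) (auto simp: inj_on_def)
  also have "\<dots> = a i $ c" using assms by simp
  finally show ?thesis .
qed

lemma adj_rows_matrix_axis:
  assumes "inj_on k {..<p}" "i < p"
  shows "adj (rows_matrix k p a) *v axis (k i) 1 = conj_vec (a i)"
  by (simp add: matrix_vector_mult_axis adj_def conj_vec_def rows_matrix_row[OF assms] vec_eq_iff)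

lemma nonzero_rows_le_rows_matrix: "nonzero_rows_le (rows_matrix k p a) p"
  unfolding nonzero_rows_le_def rows_matrix_def by (auto intro!: exI[of _ k] sum.neutral)

lemma nonzero_rows_le_conj_mat: "nonzero_rows_le A p \<Longrightarrow> nonzero_rows_le (conj_mat A) p"
  unfolding nonzero_rows_le_def conj_mat_def by simp

lemma supported_pp_kron_mult:
  assumes "nonzero_rows_le A p" "nonzero_rows_le B p"
  shows "supported_pp (kron A B ** M) p"
proof -
  obtain k where k: "\<And>r c. r \<notin> k ` {..<p} \<Longrightarrow> A $ r $ c = 0"
    using assms(1) unfolding nonzero_rows_le_def by blast
  obtain l where l: "\<And>s c. s \<notin> l ` {..<p} \<Longrightarrow> B $ s $ c = 0"
    using assms(2) unfolding nonzero_rows_le_def by blast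
  let ?G = "{tens (axis (k i) 1) (axis (l j) 1) | i j. i < p \<and> j < p}"
  have "range (\<lambda>x. (kron A B ** M) *v x) \<subseteq> vec.span ?G"
  proof
    fix x assume x_range: "x \<in> range (\<lambda>x. (kron A B ** M) *v x)"
    obtain w where "x = (kron A B ** M) *v w" using x_range by blast
    then have x: "x = kron A B *v (M *v w)" by (simp add: matrix_vector_mul_assoc)
    have "x $ q *s tens (axis (fst q) 1) (axis (snd q) 1) \<in> vec.span ?G" for q
    proof (cases "fst q \<in> k ` {..<p} \<and> snd q \<in> l ` {..<p}")
      case True
      then obtain i j where "i < p" "j < p" "fst q = k i" "snd q = l j" by blast
      then have "tens (axis (fst q) 1) (axis (snd q) 1) \<in> ?G" by auto
      then show ?thesis by (intro vec.span_scale vec.span_base)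
    next
      case False
      then have "x $ q = 0"
        using k l by (auto simp: x kron_def matrix_vector_mult_def)
      then show ?thesis by (simp add: vec.span_zero)
    qed
    then show "x \<in> vec.span ?G" by (subst tens_axis_expansion) (intro vec.span_sum)
  qed
  then show ?thesis unfolding supported_pp_def cspan_eq_span
    by (intro exI[of _ "\<lambda>i. axis (k i) 1"] exI[of _ "\<lambda>j. axis (l j) 1"])
qed

lemma local_projection_neg_form:
  fixes H :: "complex^('a::finite \<times> 'b::finite)^('a \<times> 'b)"
  assumes "hermitian H" "\<not> psd H"
  obtains A B z where "nonzero_rows_le A (pmin H)" and "nonzero_rows_le B (pmin H)"
    and "Re (cinner z ((kron A B ** H ** adj (kron A B)) *v z)) < 0"
proof -
  define p where "p = pmin H"
  obtain a b where neg: "Re (cinner (\<Sum>i<p. tens (a i) (b i)) (H *v (\<Sum>i<p. tens (a i) (b i)))) < 0"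
    and "p \<le> CARD('a)" "p \<le> CARD('b)"
    using pmin_neg_witness[OF assms] unfolding p_def by blast
  then obtain k :: "nat \<Rightarrow> 'a" and l :: "nat \<Rightarrow> 'b" where k: "inj_on k {..<p}" and l: "inj_on l {..<p}"
    using card_le_inj[of "{..<p}" "UNIV::'a set"] card_le_inj[of "{..<p}" "UNIV::'b set"] by auto
  define A where "A = rows_matrix k p (\<lambda>i. conj_vec (a i))"
  define B where "B = rows_matrix l p (\<lambda>i. conj_vec (b i))"
  define z where "z = (\<Sum>i<p. tens (axis (k i) 1) (axis (l i) 1))"
  have "adj (kron A B) *v z = (\<Sum>i<p. tens (a i) (b i))"
    unfolding z_def adj_kron matrix_vector_mult_sum kron_matrix_vector_mult_tens
    by (intro sum.cong refl) (simp add: A_def B_def adj_rows_matrix_axis k l)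
  then have "Re (cinner z ((kron A B ** H ** adj (kron A B)) *v z)) < 0"
    using neg by (simp add: cinner_congruence)
  moreover have "nonzero_rows_le A (pmin H)" "nonzero_rows_le B (pmin H)"
    unfolding A_def B_def p_def by (rule nonzero_rows_le_rows_matrix)+
  ultimately show ?thesis using that by blast
qed

lemma sum_swap_outer_inner:
  "(\<Sum>a\<in>A. \<Sum>b\<in>B. \<Sum>c\<in>C. g a b c) = (\<Sum>c\<in>C. \<Sum>b\<in>B. \<Sum>a\<in>A. g a b c :: 'x::comm_monoid_add)"
proof -
  have "(\<Sum>a\<in>A. \<Sum>b\<in>B. \<Sum>c\<in>C. g a b c) = (\<Sum>a\<in>A. \<Sum>c\<in>C. \<Sum>b\<in>B. g a b c)"
    by (intro sum.cong refl) (rule sum.swap)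
  also have "\<dots> = (\<Sum>c\<in>C. \<Sum>a\<in>A. \<Sum>b\<in>B. g a b c)" by (rule sum.swap)
  also have "\<dots> = (\<Sum>c\<in>C. \<Sum>b\<in>B. \<Sum>a\<in>A. g a b c)" by (intro sum.cong refl) (rule sum.swap)
  finally show ?thesis .
qed

lemma ptrans_congruence_kron:
  "ptrans (kron A B ** \<rho> ** adj (kron A B)) = kron (conj_mat A) B ** ptrans \<rho> ** adj (kron (conj_mat A) B)"
  unfolding ptrans_def kron_def adj_def conj_mat_def matrix_matrix_mult_def
  apply (simp add: vec_eq_iff sum_UNIV_prod sum_distrib_left sum_distrib_right)
  apply (intro allI)
  apply (rule trans[OF sum_swap_outer_inner])
  apply (intro sum.cong refl)
  apply (simp add: mult_ac)
  done

lemma ptrans_scaleR: "ptrans (c *\<^sub>R M) = c *\<^sub>R ptrans M"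
  by (simp add: ptrans_def vec_eq_iff)

lemma ptrans_zero: "ptrans 0 = 0"
  by (simp add: ptrans_def vec_eq_iff)

lemma npt_state_local_projection:
  fixes \<rho> :: "complex ^ ('a::finite \<times> 'b::finite) ^ ('a \<times> 'b)"
  assumes "npt_state \<rho>"
  shows "\<exists>(A :: complex ^ 'a ^ 'a) (B :: complex ^ 'b ^ 'b).
           let \<sigma> = kron A B ** \<rho> ** adj (kron A B) in
           Re (trace \<sigma>) > 0 \<and> npt_state ((1 / Re (trace \<sigma>)) *\<^sub>R \<sigma>) \<and>
           supported_pp \<sigma> (pmin (ptrans \<rho>))"
proof -
  have psd: "psd \<rho>" and "\<not> psd (ptrans \<rho>)"
    using assms unfolding npt_state_def density_def by auto
  moreover have "hermitian (ptrans \<rho>)" using psd by (simp add: psd_def hermitian_ptrans)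
  ultimately obtain A0 B z where A0: "nonzero_rows_le A0 (pmin (ptrans \<rho>))"
    and B: "nonzero_rows_le B (pmin (ptrans \<rho>))"
    and neg: "Re (cinner z ((kron A0 B ** ptrans \<rho> ** adj (kron A0 B)) *v z)) < 0"
    using local_projection_neg_form by metis
  define A where "A = conj_mat A0"
  define \<sigma> where "\<sigma> = kron A B ** \<rho> ** adj (kron A B)"
  have "ptrans \<sigma> = kron A0 B ** ptrans \<rho> ** adj (kron A0 B)"
    by (simp add: \<sigma>_def A_def ptrans_congruence_kron)
  then have not_psd: "\<not> psd (ptrans \<sigma>)" using neg unfolding psd_def by (metis not_le)
  then have "\<sigma> \<noteq> 0" using psd_zero by (auto simp: ptrans_zero)
  moreover have psd_\<sigma>: "psd \<sigma>" unfolding \<sigma>_def by (rule psd_congruence[OF psd])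
  ultimately have "0 < Re (trace \<sigma>)" and "density ((1 / Re (trace \<sigma>)) *\<^sub>R \<sigma>)"
    by (simp_all add: psd_trace_pos density_normalize)
  moreover have "\<not> psd (ptrans ((1 / Re (trace \<sigma>)) *\<^sub>R \<sigma>))"
    using not_psd \<open>0 < Re (trace \<sigma>)\<close> by (simp add: ptrans_scaleR psd_scaleR_iff)
  moreover have "supported_pp \<sigma> (pmin (ptrans \<rho>))"
    unfolding \<sigma>_def matrix_mul_assoc[symmetric]
    by (intro supported_pp_kron_mult B) (simp add: A_def nonzero_rows_le_conj_mat A0)
  ultimately show ?thesis unfolding npt_state_def Let_def \<sigma>_def by blast
qed

section \<open>Entanglement witnesses\<close>

definition block_positive :: "('a::finite, 'b::finite) bop \<Rightarrow> bool" where
  "block_positive W \<longleftrightarrow> (\<forall>\<rho>. separable \<rho> \<longrightarrow> 0 \<le> Re (trace (W ** \<rho>)))"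

lemma ent_witness_iff:
  "ent_witness W \<longleftrightarrow> hermitian W \<and> block_positive W \<and> (\<exists>\<sigma>. entangled \<sigma> \<and> Re (trace (W ** \<sigma>)) < 0)"
  by (simp add: ent_witness_def block_positive_def)

lemma separable_kron: "density \<alpha> \<Longrightarrow> density \<beta> \<Longrightarrow> separable (kron \<alpha> \<beta>)"
  unfolding separable_def
  by (intro conjI exI[of _ "1::nat"] exI[of _ "\<lambda>_. 1::real"] exI[of _ "\<lambda>_. \<alpha>"] exI[of _ "\<lambda>_. \<beta>"])
     (auto simp: density_def psd_kron trace_kron)

lemma block_positive_kron_psd:
  assumes W: "block_positive W" and "psd \<alpha>" "psd \<beta>"
  shows "0 \<le> Re (trace (W ** kron \<alpha> \<beta>))"
proof (cases "\<alpha> = 0 \<or> \<beta> = 0")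
  case True
  then show ?thesis by (auto simp: kron_def trace_def matrix_matrix_mult_def)
next
  case False
  define c where "c = (1 / Re (trace \<alpha>)) * (1 / Re (trace \<beta>))"
  have "0 < c" using False assms(2,3) by (simp add: c_def psd_trace_pos)
  have "separable (kron ((1 / Re (trace \<alpha>)) *\<^sub>R \<alpha>) ((1 / Re (trace \<beta>)) *\<^sub>R \<beta>))"
    using False assms(2,3) by (simp add: separable_kron density_normalize)
  then have "separable (c *\<^sub>R kron \<alpha> \<beta>)" by (simp only: kron_scaleR c_def)
  then have "0 \<le> Re (trace (W ** (c *\<^sub>R kron \<alpha> \<beta>)))" using W by (simp add: block_positive_def)
  then have "0 \<le> c * Re (trace (W ** kron \<alpha> \<beta>))" by (simp add: matrix_mult_scaleR_right trace_scaleR)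
  then show ?thesis using \<open>0 < c\<close> by (simp add: zero_le_mult_iff)
qed

lemma block_positive_congruence_kron:
  fixes W :: "complex^('a::finite \<times> 'b::finite)^('a \<times> 'b)"
  assumes W: "block_positive W"
  shows "block_positive (kron A B ** W ** adj (kron A B))"
  unfolding block_positive_def
proof (intro allI impI)
  fix \<rho> :: "complex^('a \<times> 'b)^('a \<times> 'b)"
  assume "separable \<rho>"
  then obtain K :: nat and pr \<alpha> \<beta> where ab: "\<forall>i<K. 0 \<le> pr i \<and> density (\<alpha> i) \<and> density (\<beta> i)"
    and \<rho>: "\<rho> = (\<Sum>i<K. pr i *\<^sub>R kron (\<alpha> i) (\<beta> i))"
    unfolding separable_def by blast
  define X where "X = kron A B"
  have "trace (X ** W ** adj X ** \<rho>) = trace (X ** (W ** adj X ** \<rho>))"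
    by (simp add: matrix_mul_assoc)
  also have "\<dots> = trace (W ** adj X ** \<rho> ** X)" by (rule trace_mul_sym)
  also have "\<dots> = trace (W ** (adj X ** \<rho> ** X))" by (simp add: matrix_mul_assoc)
  also have "adj X ** \<rho> ** X = (\<Sum>i<K. pr i *\<^sub>R kron (adj A ** \<alpha> i ** A) (adj B ** \<beta> i ** B))"
    unfolding \<rho> matrix_mult_sum_right matrix_mult_sum_left matrix_mult_scaleR_left
      matrix_mult_scaleR_right X_def adj_kron kron_mult ..
  finally have "Re (trace (X ** W ** adj X ** \<rho>))
      = (\<Sum>i<K. pr i * Re (trace (W ** kron (adj A ** \<alpha> i ** A) (adj B ** \<beta> i ** B))))"
    by (simp add: matrix_mult_sum_right trace_sum matrix_mult_scaleR_right trace_scaleR Re_sum)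
  also have "\<dots> \<ge> 0"
  proof (intro sum_nonneg mult_nonneg_nonneg)
    fix i assume "i \<in> {..<K}"
    then show "0 \<le> pr i" using ab by simp
    have "psd (adj A ** \<alpha> i ** A)" "psd (adj B ** \<beta> i ** B)"
      using ab \<open>i \<in> {..<K}\<close> psd_congruence[of "\<alpha> i" "adj A"] psd_congruence[of "\<beta> i" "adj B"]
      by (auto simp: density_def)
    then show "0 \<le> Re (trace (W ** kron (adj A ** \<alpha> i ** A) (adj B ** \<beta> i ** B)))"
      using block_positive_kron_psd[OF W] by simp
  qed
  finally show "0 \<le> Re (trace (kron A B ** W ** adj (kron A B) ** \<rho>))" by (simp add: X_def)
qed

lemma trace_outer: "trace (outer v v) = cinner v v"
  by (simp add: trace_def outer_def cinner_def mult.commute)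

lemma ent_witnessI:
  assumes "hermitian W" "block_positive W" and neg: "Re (cinner z (W *v z)) < 0"
  shows "ent_witness W"
proof -
  have "z \<noteq> 0" using neg by auto
  then have "0 < Re (trace (outer z z))" by (simp add: trace_outer cinner_self_pos)
  then have "outer z z \<noteq> 0" by (auto simp: trace_def)
  define c where "c = 1 / Re (trace (outer z z))"
  have "0 < c" using psd_trace_pos[OF psd_outer \<open>outer z z \<noteq> 0\<close>] by (simp add: c_def)
  have "density (c *\<^sub>R outer z z)" unfolding c_def by (rule density_normalize[OF psd_outer]) fact
  moreover have "Re (trace (W ** (c *\<^sub>R outer z z))) = c * Re (cinner z (W *v z))"
    by (simp add: matrix_mult_scaleR_right trace_scaleR trace_mult_outer)
  then have "Re (trace (W ** (c *\<^sub>R outer z z))) < 0"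
    using neg \<open>0 < c\<close> by (simp add: mult_pos_neg)
  ultimately show ?thesis
    using assms(1,2) unfolding ent_witness_iff entangled_def block_positive_def by (meson not_le)
qed

lemma ent_witness_local_projection:
  fixes W :: "complex ^ ('a::finite \<times> 'b::finite) ^ ('a \<times> 'b)"
  assumes "ent_witness W"
  shows "\<exists>(A :: complex ^ 'a ^ 'a) (B :: complex ^ 'b ^ 'b).
           let W' = kron A B ** W ** adj (kron A B) in ent_witness W' \<and> supported_pp W' (pmin W)"
proof -
  obtain \<sigma> where herm: "hermitian W" and W: "block_positive W"
    and "entangled \<sigma>" "Re (trace (W ** \<sigma>)) < 0"
    using assms unfolding ent_witness_iff by blast
  then have "\<not> psd W" using trace_mult_psd_nonneg by (fastforce simp: entangled_def density_def)
  then obtain A B z where A: "nonzero_rows_le A (pmin W)" and B: "nonzero_rows_le B (pmin W)"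
    and neg: "Re (cinner z ((kron A B ** W ** adj (kron A B)) *v z)) < 0"
    using local_projection_neg_form[OF herm] by metis
  have "ent_witness (kron A B ** W ** adj (kron A B))"
    using hermitian_congruence[OF herm] block_positive_congruence_kron[OF W] neg by (rule ent_witnessI)
  moreover have "supported_pp (kron A B ** W ** adj (kron A B)) (pmin W)"
    unfolding matrix_mul_assoc[symmetric] using A B by (rule supported_pp_kron_mult)
  ultimately show ?thesis unfolding Let_def by blast
qed

theorem lemma10:
  fixes \<rho> W :: "complex ^ ('a::finite \<times> 'b::finite) ^ ('a \<times> 'b)"
  shows "(npt_state \<rho> \<longrightarrow>
            (\<exists>(A :: complex ^ 'a ^ 'a) (B :: complex ^ 'b ^ 'b).
               let \<sigma> = kron A B ** \<rho> ** adj (kron A B) in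
               Re (trace \<sigma>) > 0 \<and>
               npt_state ((1 / Re (trace \<sigma>)) *\<^sub>R \<sigma>) \<and>
               supported_pp \<sigma> (pmin (ptrans \<rho>))))
       \<and> (ent_witness W \<longrightarrow>
            (\<exists>(A :: complex ^ 'a ^ 'a) (B :: complex ^ 'b ^ 'b).
               let W' = kron A B ** W ** adj (kron A B) in
               ent_witness W' \<and> supported_pp W' (pmin W)))"
  using npt_state_local_projection ent_witness_local_projection by blast

end
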